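(* For all integers $n\ge 3$ and $m\ge 1$, $\alpha_{n,m}\ge\alpha_{n+1,m}$.
   Context: Let $\mathbb{K}$ be a field. For $n\ge 3$, $Q_n$ is the cycle graph on vertices $1,\dots,n$ (edges $\{i,i+1\}$ for $1\le i\le n-1$ and $\{n,1\}$); $B_n$ is the simplicial complex on $\{0,\dots,n+1\}$ whose facets are $\{0,i,j\}$ and $\{n+1,i,j\}$ for each edge $\{i,j\}$ of $Q_n$ (boundary of the bipyramid over the $n$-gon); $I_{B_n}\subset R=\mathbb{K}[x_0,\dots,x_{n+1}]$ is its Stanley-Reisner ideal, generated by $\prod_{i\in\tau}x_i$ over non-faces $\tau$. For a homogeneous ideal $I$, $I^{(m)}=R\cap\bigcap_{P\in\mathrm{Ass}(I)}I^mR_P$, $\alpha(I)=\min\{t:I_t\ne0\}$, and $\alpha_{n,m}:=\alpha(I_{B_n}^{(m)})$. *)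

theory Defs
  imports Main "HOL-Library.Poly_Mapping"
begin

text \<open>Polynomials over a field 'k in variables x_0, x_1, ... are modelled as
 finitely supported maps from monomials (exponent vectors nat =>0 nat) to 'k.\<close>

type_synonym 'k mpoly = "(nat \<Rightarrow>\<^sub>0 nat) \<Rightarrow>\<^sub>0 'k"

definition polyR :: "nat \<Rightarrow> ('k::field) mpoly set" where
  "polyR N = {p. \<forall>a \<in> Poly_Mapping.keys p. \<forall>v \<in> Poly_Mapping.keys a. v \<le> N}"

definition is_ideal :: "nat \<Rightarrow> ('k::field) mpoly set \<Rightarrow> bool" where
  "is_ideal N I \<longleftrightarrow> I \<subseteq> polyR N \<and> 0 \<in> I \<and>
     (\<forall>a\<in>I. \<forall>b\<in>I. a + b \<in> I) \<and> (\<forall>r\<in>polyR N. \<forall>a\<in>I. r * a \<in> I)"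

definition ideal_gen :: "nat \<Rightarrow> ('k::field) mpoly set \<Rightarrow> 'k mpoly set" where
  "ideal_gen N G = \<Inter> {I. is_ideal N I \<and> G \<subseteq> I}"

definition ideal_pow :: "nat \<Rightarrow> ('k::field) mpoly set \<Rightarrow> nat \<Rightarrow> 'k mpoly set" where
  "ideal_pow N I m = ideal_gen N {prod_list xs | xs. length xs = m \<and> set xs \<subseteq> I}"

definition is_prime_ideal :: "nat \<Rightarrow> ('k::field) mpoly set \<Rightarrow> bool" where
  "is_prime_ideal N P \<longleftrightarrow> is_ideal N P \<and> 1 \<notin> P \<and>
     (\<forall>a\<in>polyR N. \<forall>b\<in>polyR N. a * b \<in> P \<longrightarrow> a \<in> P \<or> b \<in> P)"

definition Ass :: "nat \<Rightarrow> ('k::field) mpoly set \<Rightarrow> 'k mpoly set set" where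
  "Ass N I = {P. is_prime_ideal N P \<and> (\<exists>f\<in>polyR N. P = {g \<in> polyR N. g * f \<in> I})}"

text \<open>Symbolic power I^(m) = R \<inter> \<Inter>_{P \<in> Ass I} I^m R_P. Since R is a domain,
 f \<in> R lies in I^m R_P iff s*f \<in> I^m for some s \<in> R - P.\<close>
definition symb_pow :: "nat \<Rightarrow> ('k::field) mpoly set \<Rightarrow> nat \<Rightarrow> 'k mpoly set" where
  "symb_pow N I m = {f \<in> polyR N. \<forall>P \<in> Ass N I. \<exists>s \<in> polyR N - P. s * f \<in> ideal_pow N I m}"

definition mdeg :: "(nat \<Rightarrow>\<^sub>0 nat) \<Rightarrow> nat" where
  "mdeg a = (\<Sum>v\<in>Poly_Mapping.keys a. Poly_Mapping.lookup a v)"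

definition homogeneous :: "nat \<Rightarrow> ('k::field) mpoly \<Rightarrow> bool" where
  "homogeneous t p \<longleftrightarrow> (\<forall>a \<in> Poly_Mapping.keys p. mdeg a = t)"

definition alpha :: "('k::field) mpoly set \<Rightarrow> nat" where
  "alpha I = (LEAST t. \<exists>p \<in> I. p \<noteq> 0 \<and> homogeneous t p)"

definition cycle_edge :: "nat \<Rightarrow> nat \<Rightarrow> nat \<Rightarrow> bool" where
  "cycle_edge n i j \<longleftrightarrow> (1 \<le> i \<and> i \<le> n - 1 \<and> j = i + 1) \<or> (i = n \<and> j = 1)"

definition facets_B :: "nat \<Rightarrow> nat set set" where
  "facets_B n = {{0, i, j} | i j. cycle_edge n i j} \<union> {{n + 1, i, j} | i j. cycle_edge n i j}"

definition face_B :: "nat \<Rightarrow> nat set \<Rightarrow> bool" where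
  "face_B n \<sigma> \<longleftrightarrow> (\<exists>F \<in> facets_B n. \<sigma> \<subseteq> F)"

definition sqfree_monom :: "nat set \<Rightarrow> ('k::field) mpoly" where
  "sqfree_monom \<tau> = Poly_Mapping.single (\<Sum>i\<in>\<tau>. Poly_Mapping.single i 1) 1"

definition SR_ideal_B :: "nat \<Rightarrow> ('k::field) mpoly set" where
  "SR_ideal_B n = ideal_gen (n + 1)
     {sqfree_monom \<tau> | \<tau>. \<tau> \<subseteq> {0..n + 1} \<and> \<not> face_B n \<tau>}"

definition alpha_nm :: "('k::field) itself \<Rightarrow> nat \<Rightarrow> nat \<Rightarrow> nat" where
  "alpha_nm _ n m = alpha (symb_pow (n + 1) (SR_ideal_B n :: 'k mpoly set) m)"

end

theory Submission
  imports Defs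
begin

text \<open>For a facet \<open>F\<close> of a simplicial complex on \<open>{0..N}\<close>, let \<open>P\<^sub>F = (x\<^sub>v | v \<notin> F)\<close>.
  Grading monomials by their degree outside \<open>F\<close> shows that the powers of \<open>P\<^sub>F\<close> are
  \<open>P\<^sub>F\<close>-primary, that each \<open>P\<^sub>F\<close> is the colon ideal \<open>(I : x\<^sub>F)\<close> of the
  Stanley-Reisner ideal \<open>I\<close>, and that every associated prime of \<open>I\<close> lies in some \<open>P\<^sub>F\<close>.
  Hence the monomials of any element of \<open>I\<^sup>(\<^sup>m\<^sup>)\<close> have degree at least \<open>m\<close>
  outside every facet, while each such monomial lies in \<open>I\<^sup>(\<^sup>m\<^sup>)\<close>, so
  \<open>\<alpha>(I\<^sup>(\<^sup>m\<^sup>))\<close> is the least degree of such an exponent vector.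
  For the bipyramid, an exponent vector for \<open>B\<^sub>n\<close> becomes one for \<open>B\<^sub>n\<^sub>+\<^sub>1\<close> of the
  same degree by moving the exponent of the apex \<open>n + 1\<close> to the new apex \<open>n + 2\<close>:
  every facet of \<open>B\<^sub>n\<^sub>+\<^sub>1\<close> then carries no more of the degree than some facet of \<open>B\<^sub>n\<close>.\<close>

lemma keys_plus_nat:
  "Poly_Mapping.keys ((a::'v \<Rightarrow>\<^sub>0 nat) + b) = Poly_Mapping.keys a \<union> Poly_Mapping.keys b"
  by (auto simp: in_keys_iff lookup_add)

lemma polyR_add: "p \<in> polyR N \<Longrightarrow> q \<in> polyR N \<Longrightarrow> p + q \<in> polyR N"
  using keys_add[of p q] unfolding polyR_def by blast

lemma polyR_diff: "p \<in> polyR N \<Longrightarrow> q \<in> polyR N \<Longrightarrow> p - q \<in> polyR N"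
  using keys_diff[of p q] unfolding polyR_def by blast

lemma polyR_mult:
  assumes "p \<in> polyR N" "q \<in> polyR N"
  shows "p * q \<in> polyR N"
  unfolding polyR_def
proof (intro CollectI ballI)
  fix a v
  assume "a \<in> Poly_Mapping.keys (p * q)" and v: "v \<in> Poly_Mapping.keys a"
  then obtain b c where "a = b + c" "b \<in> Poly_Mapping.keys p" "c \<in> Poly_Mapping.keys q"
    using keys_mult[of p q] by blast
  with v assms show "v \<le> N"
    unfolding polyR_def by (auto simp: keys_plus_nat)
qed

lemma polyR_one: "1 \<in> polyR N"
  by (simp add: polyR_def)

lemma polyR_single: "Poly_Mapping.keys a \<subseteq> {..N} \<Longrightarrow> Poly_Mapping.single a c \<in> polyR N"
  by (auto simp: polyR_def)

lemma poly_eq_sum_monoms: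
  "f = (\<Sum>a\<in>Poly_Mapping.keys f. Poly_Mapping.single a (Poly_Mapping.lookup f a))"
  by (rule poly_mapping_eqI) (simp add: lookup_sum lookup_single when_def in_keys_iff)

lemma ideal_gen_least: "is_ideal N J \<Longrightarrow> G \<subseteq> J \<Longrightarrow> ideal_gen N G \<subseteq> J"
  unfolding ideal_gen_def by blast

lemma ideal_gen_mult_gen: "g \<in> G \<Longrightarrow> r \<in> polyR N \<Longrightarrow> r * g \<in> ideal_gen N G"
  unfolding ideal_gen_def is_ideal_def by blast

lemma ideal_gen_sum:
  assumes "\<And>x. x \<in> A \<Longrightarrow> f x \<in> ideal_gen N G"
  shows "sum f A \<in> ideal_gen N G"
proof (cases "finite A")
  case True
  then show ?thesis
    using assms unfolding ideal_gen_def is_ideal_def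
    by (induction rule: finite_induct) auto
qed (auto simp: ideal_gen_def is_ideal_def)

definition poly_restrict :: "('a \<Rightarrow> bool) \<Rightarrow> ('a \<Rightarrow>\<^sub>0 'b::zero) \<Rightarrow> 'a \<Rightarrow>\<^sub>0 'b" where
  "poly_restrict P f = Abs_poly_mapping (\<lambda>a. if P a then Poly_Mapping.lookup f a else 0)"

lemma lookup_poly_restrict:
  "Poly_Mapping.lookup (poly_restrict P f) a = (if P a then Poly_Mapping.lookup f a else 0)"
proof -
  have "finite {a. (if P a then Poly_Mapping.lookup f a else 0) \<noteq> 0}"
    by (rule finite_subset[of _ "Poly_Mapping.keys f"]) (auto simp: in_keys_iff split: if_splits)
  then show ?thesis
    unfolding poly_restrict_def by simp
qed

lemma keys_poly_restrict:
  "Poly_Mapping.keys (poly_restrict P f) = {a \<in> Poly_Mapping.keys f. P a}"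
  by (auto simp: in_keys_iff lookup_poly_restrict split: if_splits)

lemma poly_restrict_split:
  "(f :: 'a \<Rightarrow>\<^sub>0 'b::monoid_add) = poly_restrict P f + poly_restrict (\<lambda>a. \<not> P a) f"
  by (rule poly_mapping_eqI) (simp add: lookup_add lookup_poly_restrict)

lemma polyR_poly_restrict: "f \<in> polyR N \<Longrightarrow> poly_restrict P f \<in> polyR N"
  by (auto simp: polyR_def keys_poly_restrict)

definition deg_outside :: "'v set \<Rightarrow> ('v \<Rightarrow>\<^sub>0 nat) \<Rightarrow> nat" where
  "deg_outside F a = (\<Sum>v\<in>Poly_Mapping.keys a - F. Poly_Mapping.lookup a v)"

lemma sum_lookup_superset:
  assumes "finite S" "Poly_Mapping.keys a \<subseteq> S"
  shows "(\<Sum>v\<in>S - F. Poly_Mapping.lookup a v) = (\<Sum>v\<in>Poly_Mapping.keys a - F. Poly_Mapping.lookup a v)"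
  using assms by (intro sum.mono_neutral_right) (auto simp: in_keys_iff)

lemma mdeg_eq_sum_superset:
  "finite S \<Longrightarrow> Poly_Mapping.keys a \<subseteq> S \<Longrightarrow> mdeg a = (\<Sum>v\<in>S. Poly_Mapping.lookup a v)"
  using sum_lookup_superset[of S a "{}"] by (simp add: mdeg_def)

lemma deg_outside_add: "deg_outside F (a + b) = deg_outside F a + deg_outside F b"
proof -
  let ?S = "Poly_Mapping.keys a \<union> Poly_Mapping.keys b"
  have "deg_outside F (a + b) = (\<Sum>v\<in>?S - F. Poly_Mapping.lookup (a + b) v)"
    unfolding deg_outside_def by (rule sum_lookup_superset[symmetric]) (auto simp: keys_plus_nat)
  also have "\<dots> = (\<Sum>v\<in>?S - F. Poly_Mapping.lookup a v) + (\<Sum>v\<in>?S - F. Poly_Mapping.lookup b v)"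
    by (simp add: lookup_add sum.distrib)
  also have "\<dots> = deg_outside F a + deg_outside F b"
    unfolding deg_outside_def
    using sum_lookup_superset[of ?S a F] sum_lookup_superset[of ?S b F] by simp
  finally show ?thesis .
qed

lemma deg_outside_single: "deg_outside F (Poly_Mapping.single j c) = (if j \<in> F then 0 else c)"
  by (cases "c = 0") (auto simp: deg_outside_def insert_Diff_if)

lemma deg_outside_eq_0_iff: "deg_outside F a = 0 \<longleftrightarrow> Poly_Mapping.keys a \<subseteq> F"
  unfolding deg_outside_def by (auto simp: in_keys_iff)

lemma deg_outside_plus_sum:
  assumes "finite F"
  shows "deg_outside F a + (\<Sum>v\<in>F. Poly_Mapping.lookup a v) = mdeg a"
proof -
  let ?S = "Poly_Mapping.keys a \<union> F"
  have "(\<Sum>v\<in>?S - F. Poly_Mapping.lookup a v) + (\<Sum>v\<in>F. Poly_Mapping.lookup a v)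
      = (\<Sum>v\<in>?S. Poly_Mapping.lookup a v)"
    using assms by (subst sum.subset_diff[of F ?S]) auto
  then show ?thesis
    unfolding deg_outside_def
    using assms sum_lookup_superset[of ?S a F] mdeg_eq_sum_superset[of ?S a] by simp
qed

definition sqfree_exp :: "'v set \<Rightarrow> ('v \<Rightarrow>\<^sub>0 nat)" where
  "sqfree_exp \<tau> = (\<Sum>i\<in>\<tau>. Poly_Mapping.single i 1)"

lemma sqfree_monom_eq: "sqfree_monom \<tau> = Poly_Mapping.single (sqfree_exp \<tau>) 1"
  by (simp add: sqfree_monom_def sqfree_exp_def)

lemma lookup_sqfree_exp:
  "finite \<tau> \<Longrightarrow> Poly_Mapping.lookup (sqfree_exp \<tau>) v = (if v \<in> \<tau> then 1 else 0)"
  unfolding sqfree_exp_def by (induction rule: finite_induct) (auto simp: lookup_add lookup_single when_def)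

lemma keys_sqfree_exp: "finite \<tau> \<Longrightarrow> Poly_Mapping.keys (sqfree_exp \<tau>) = \<tau>"
  by (auto simp: in_keys_iff lookup_sqfree_exp split: if_splits)

lemma sqfree_exp_insert:
  "finite \<tau> \<Longrightarrow> j \<notin> \<tau> \<Longrightarrow> sqfree_exp (insert j \<tau>) = Poly_Mapping.single j 1 + sqfree_exp \<tau>"
  by (simp add: sqfree_exp_def)

lemma deg_outside_sqfree_exp: "finite \<tau> \<Longrightarrow> deg_outside F (sqfree_exp \<tau>) = card (\<tau> - F)"
  by (simp add: deg_outside_def keys_sqfree_exp lookup_sqfree_exp)

lemma sqfree_monom_in_polyR: "\<tau> \<subseteq> {..N} \<Longrightarrow> sqfree_monom \<tau> \<in> polyR N"
  unfolding sqfree_monom_eq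
  by (intro polyR_single) (metis finite_atMost keys_sqfree_exp rev_finite_subset)

text \<open>The power \<open>P\<^sub>F\<^sup>k\<close>, described by the exponents of its monomials.\<close>
definition face_prime_pow :: "nat \<Rightarrow> nat set \<Rightarrow> nat \<Rightarrow> ('k::field) mpoly set" where
  "face_prime_pow N F k = {f \<in> polyR N. \<forall>a\<in>Poly_Mapping.keys f. k \<le> deg_outside F a}"

lemma face_prime_pow_0 [simp]: "face_prime_pow N F 0 = polyR N"
  by (auto simp: face_prime_pow_def)

lemma face_prime_pow_antimono: "l \<le> k \<Longrightarrow> face_prime_pow N F k \<subseteq> face_prime_pow N F l"
  by (auto simp: face_prime_pow_def)

lemma face_prime_pow_add:
  "p \<in> face_prime_pow N F k \<Longrightarrow> q \<in> face_prime_pow N F k \<Longrightarrow> p + q \<in> face_prime_pow N F k"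
  using keys_add[of p q] by (auto simp: face_prime_pow_def intro: polyR_add)

lemma face_prime_pow_diff:
  "p \<in> face_prime_pow N F k \<Longrightarrow> q \<in> face_prime_pow N F k \<Longrightarrow> p - q \<in> face_prime_pow N F k"
  using keys_diff[of p q] by (auto simp: face_prime_pow_def intro: polyR_diff)

lemma face_prime_pow_mult:
  assumes "p \<in> face_prime_pow N F k" "q \<in> face_prime_pow N F l"
  shows "p * q \<in> face_prime_pow N F (k + l)"
  unfolding face_prime_pow_def
proof (intro CollectI conjI ballI)
  show "p * q \<in> polyR N"
    using assms by (auto simp: face_prime_pow_def intro: polyR_mult)
  fix a
  assume "a \<in> Poly_Mapping.keys (p * q)"
  then obtain b c where "a = b + c" "b \<in> Poly_Mapping.keys p" "c \<in> Poly_Mapping.keys q"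
    using keys_mult[of p q] by blast
  moreover from assms have "k \<le> deg_outside F b" "l \<le> deg_outside F c"
    using calculation unfolding face_prime_pow_def by blast+
  ultimately show "k + l \<le> deg_outside F a"
    by (simp add: deg_outside_add)
qed

lemma is_ideal_face_prime_pow: "is_ideal N (face_prime_pow N F k)"
  unfolding is_ideal_def
proof (intro conjI ballI)
  show "face_prime_pow N F k \<subseteq> polyR N" "0 \<in> face_prime_pow N F k"
    by (auto simp: face_prime_pow_def polyR_def)
  show "a + b \<in> face_prime_pow N F k" if "a \<in> face_prime_pow N F k" "b \<in> face_prime_pow N F k" for a b
    using that by (rule face_prime_pow_add)
  show "r * a \<in> face_prime_pow N F k" if "r \<in> polyR N" "a \<in> face_prime_pow N F k" for r a
    using face_prime_pow_mult[of r N F 0 a k] that by simp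
qed

lemma deg_outside_keys_mult:
  assumes "\<forall>b\<in>Poly_Mapping.keys p. deg_outside F b = k" "\<forall>c\<in>Poly_Mapping.keys q. deg_outside F c = l"
    and "a \<in> Poly_Mapping.keys (p * q)"
  shows "deg_outside F a = k + l"
proof -
  obtain b c where "a = b + c" "b \<in> Poly_Mapping.keys p" "c \<in> Poly_Mapping.keys q"
    using assms(3) keys_mult[of p q] by blast
  with assms(1,2) show ?thesis
    by (simp add: deg_outside_add)
qed

lemma face_prime_pow_split_lowest:
  assumes "p \<in> face_prime_pow N F k" "p \<notin> face_prime_pow N F (Suc k)"
  obtains p0 p1 where "p = p0 + p1" "p0 \<noteq> 0" "\<forall>a\<in>Poly_Mapping.keys p0. deg_outside F a = k"
    "p0 \<in> face_prime_pow N F k" "p1 \<in> face_prime_pow N F (Suc k)"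
proof
  let ?p0 = "poly_restrict (\<lambda>a. deg_outside F a = k) p"
  let ?p1 = "poly_restrict (\<lambda>a. deg_outside F a \<noteq> k) p"
  show "p = ?p0 + ?p1"
    by (rule poly_restrict_split)
  obtain a where a: "a \<in> Poly_Mapping.keys p" "\<not> Suc k \<le> deg_outside F a"
    using assms unfolding face_prime_pow_def by blast
  moreover have "k \<le> deg_outside F a"
    using assms(1) a(1) unfolding face_prime_pow_def by blast
  ultimately have "a \<in> Poly_Mapping.keys ?p0"
    by (simp add: keys_poly_restrict)
  then show "?p0 \<noteq> 0"
    by auto
  show "\<forall>a\<in>Poly_Mapping.keys ?p0. deg_outside F a = k"
    by (simp add: keys_poly_restrict)
  show "?p0 \<in> face_prime_pow N F k" "?p1 \<in> face_prime_pow N F (Suc k)"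
    using assms(1) by (auto simp: face_prime_pow_def keys_poly_restrict polyR_poly_restrict)
qed

text \<open>The components of lowest degree outside \<open>F\<close> multiply to a nonzero polynomial
  of that degree.\<close>
lemma mult_notin_face_prime_pow:
  assumes p: "p \<in> face_prime_pow N F j" "p \<notin> face_prime_pow N F (Suc j)"
    and q: "q \<in> face_prime_pow N F k" "q \<notin> face_prime_pow N F (Suc k)"
  shows "p * q \<notin> face_prime_pow N F (Suc (j + k))"
proof
  assume pq: "p * q \<in> face_prime_pow N F (Suc (j + k))"
  obtain p0 p1 where p_split: "p = p0 + p1" "p0 \<noteq> 0" "\<forall>a\<in>Poly_Mapping.keys p0. deg_outside F a = j"
    "p0 \<in> face_prime_pow N F j" "p1 \<in> face_prime_pow N F (Suc j)"
    using p by (rule face_prime_pow_split_lowest)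
  obtain q0 q1 where q_split: "q = q0 + q1" "q0 \<noteq> 0" "\<forall>a\<in>Poly_Mapping.keys q0. deg_outside F a = k"
    "q0 \<in> face_prime_pow N F k" "q1 \<in> face_prime_pow N F (Suc k)"
    using q by (rule face_prime_pow_split_lowest)
  have "p0 * q0 = p * q - (p0 * q1 + p1 * q0 + p1 * q1)"
    unfolding p_split(1) q_split(1) by (simp add: algebra_simps)
  also have "\<dots> \<in> face_prime_pow N F (Suc (j + k))"
    using pq face_prime_pow_mult[OF p_split(4) q_split(5)] face_prime_pow_mult[OF p_split(5) q_split(4)]
      face_prime_pow_mult[OF p_split(5) q_split(5)] face_prime_pow_antimono[of "Suc (j + k)" "Suc j + Suc k" N F]
    by (auto intro!: face_prime_pow_diff face_prime_pow_add)
  finally have in_higher: "p0 * q0 \<in> face_prime_pow N F (Suc (j + k))" .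
  have "p0 * q0 \<noteq> 0"
    using p_split(2) q_split(2) by simp
  then obtain a where a: "a \<in> Poly_Mapping.keys (p0 * q0)"
    using keys_eq_empty by blast
  then have "deg_outside F a = j + k"
    using p_split(3) q_split(3) by (rule deg_outside_keys_mult[rotated 2])
  moreover have "Suc (j + k) \<le> deg_outside F a"
    using in_higher a by (auto simp: face_prime_pow_def)
  ultimately show False
    by simp
qed

lemma face_prime_pow_exact_order:
  assumes "p \<in> polyR N" "p \<notin> face_prime_pow N F m"
  obtains k where "k < m" "p \<in> face_prime_pow N F k" "p \<notin> face_prime_pow N F (Suc k)"
  using assms(2)
proof (induction m)
  case (Suc m)
  then show thesis
    by (cases "p \<in> face_prime_pow N F m") (auto intro: less_SucI)
qed (use assms(1) in simp)

lemma face_prime_pow_primary: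
  assumes s: "s \<in> polyR N" "s \<notin> face_prime_pow N F 1"
    and p: "p \<in> polyR N" and sp: "s * p \<in> face_prime_pow N F m"
  shows "p \<in> face_prime_pow N F m"
proof (rule ccontr)
  assume "p \<notin> face_prime_pow N F m"
  with p obtain k where "k < m" "p \<in> face_prime_pow N F k" "p \<notin> face_prime_pow N F (Suc k)"
    by (rule face_prime_pow_exact_order)
  then have "s * p \<notin> face_prime_pow N F (Suc (0 + k))"
    using s by (intro mult_notin_face_prime_pow) simp_all
  moreover have "s * p \<in> face_prime_pow N F (Suc k)"
    using sp face_prime_pow_antimono[of "Suc k" m N F] \<open>k < m\<close> by auto
  ultimately show False
    by simp
qed

lemma is_prime_ideal_face_prime: "is_prime_ideal N (face_prime_pow N F 1)"
  unfolding is_prime_ideal_def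
proof (intro conjI ballI impI)
  show "is_ideal N (face_prime_pow N F 1)"
    by (rule is_ideal_face_prime_pow)
  show "1 \<notin> face_prime_pow N F 1"
    by (simp add: face_prime_pow_def deg_outside_def)
  show "a \<in> face_prime_pow N F 1 \<or> b \<in> face_prime_pow N F 1"
    if "a \<in> polyR N" "b \<in> polyR N" "a * b \<in> face_prime_pow N F 1" for a b
    using face_prime_pow_primary[of a N F b 1] that by blast
qed

definition facet_family :: "nat \<Rightarrow> nat set set \<Rightarrow> bool" where
  "facet_family N Fs \<longleftrightarrow> (\<forall>F\<in>Fs. F \<subseteq> {..N}) \<and> (\<forall>F\<in>Fs. \<forall>F'\<in>Fs. F \<subseteq> F' \<longrightarrow> F = F')"

definition SR_ideal :: "nat \<Rightarrow> nat set set \<Rightarrow> ('k::field) mpoly set" where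
  "SR_ideal N Fs = ideal_gen N {sqfree_monom \<tau> | \<tau>. \<tau> \<subseteq> {0..N} \<and> \<not> (\<exists>F\<in>Fs. \<tau> \<subseteq> F)}"

lemma facet_family_subset: "facet_family N Fs \<Longrightarrow> F \<in> Fs \<Longrightarrow> F \<subseteq> {..N}"
  unfolding facet_family_def by blast

lemma facet_family_antichain:
  "facet_family N Fs \<Longrightarrow> F \<in> Fs \<Longrightarrow> F' \<in> Fs \<Longrightarrow> F \<subseteq> F' \<Longrightarrow> F = F'"
  unfolding facet_family_def by blast

lemma facet_family_finite: "facet_family N Fs \<Longrightarrow> F \<in> Fs \<Longrightarrow> finite F"
  by (meson facet_family_subset finite_atMost rev_finite_subset)

lemma SR_ideal_subset_face_prime:
  assumes "F \<in> Fs"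
  shows "SR_ideal N Fs \<subseteq> face_prime_pow N F 1"
  unfolding SR_ideal_def
proof (rule ideal_gen_least[OF is_ideal_face_prime_pow], rule subsetI)
  fix g
  assume "g \<in> {sqfree_monom \<tau> | \<tau>. \<tau> \<subseteq> {0..N} \<and> \<not> (\<exists>F\<in>Fs. \<tau> \<subseteq> F)}"
  then obtain \<tau> where g: "g = sqfree_monom \<tau>" and \<tau>: "\<tau> \<subseteq> {0..N}" "\<not> (\<exists>F\<in>Fs. \<tau> \<subseteq> F)"
    by blast
  have "finite \<tau>"
    using \<tau>(1) by (meson finite_atLeastAtMost rev_finite_subset)
  have "\<tau> - F \<noteq> {}"
    using \<tau>(2) assms by blast
  with \<open>finite \<tau>\<close> have "1 \<le> deg_outside F (sqfree_exp \<tau>)"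
    by (simp add: deg_outside_sqfree_exp Suc_le_eq card_gt_0_iff)
  moreover have "sqfree_monom \<tau> \<in> polyR N"
    using \<tau>(1) by (intro sqfree_monom_in_polyR) (simp add: atLeast0AtMost)
  ultimately show "g \<in> face_prime_pow N F 1"
    by (simp add: g face_prime_pow_def sqfree_monom_eq)
qed

lemma monom_in_SR_ideal:
  assumes "Poly_Mapping.keys a \<subseteq> {..N}" "\<not> (\<exists>F\<in>Fs. Poly_Mapping.keys a \<subseteq> F)"
  shows "Poly_Mapping.single a c \<in> SR_ideal N Fs"
proof -
  let ?\<tau> = "Poly_Mapping.keys a"
  have "a = (a - sqfree_exp ?\<tau>) + sqfree_exp ?\<tau>"
    by (rule poly_mapping_eqI) (auto simp: lookup_add lookup_minus lookup_sqfree_exp in_keys_iff)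
  then have factor: "Poly_Mapping.single a c = Poly_Mapping.single (a - sqfree_exp ?\<tau>) c * sqfree_monom ?\<tau>"
    by (metis mult.right_neutral mult_single sqfree_monom_eq)
  have "Poly_Mapping.keys (a - sqfree_exp ?\<tau>) \<subseteq> ?\<tau>"
    by (auto simp: in_keys_iff lookup_minus)
  then have "Poly_Mapping.single (a - sqfree_exp ?\<tau>) c \<in> polyR N"
    using assms(1) by (intro polyR_single) blast
  moreover have "sqfree_monom ?\<tau> \<in> {sqfree_monom \<tau> | \<tau>. \<tau> \<subseteq> {0..N} \<and> \<not> (\<exists>F\<in>Fs. \<tau> \<subseteq> F)}"
    using assms by (auto simp: atLeast0AtMost)
  ultimately show ?thesis
    unfolding factor SR_ideal_def by (rule ideal_gen_mult_gen[rotated])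
qed

lemma in_SR_ideal_if_nonface_monoms:
  assumes "f \<in> polyR N" "\<forall>a\<in>Poly_Mapping.keys f. \<not> (\<exists>F\<in>Fs. Poly_Mapping.keys a \<subseteq> F)"
  shows "f \<in> SR_ideal N Fs"
proof -
  have "Poly_Mapping.single a (Poly_Mapping.lookup f a) \<in> SR_ideal N Fs"
    if "a \<in> Poly_Mapping.keys f" for a
    using assms that by (intro monom_in_SR_ideal) (auto simp: polyR_def)
  then have "(\<Sum>a\<in>Poly_Mapping.keys f. Poly_Mapping.single a (Poly_Mapping.lookup f a)) \<in> SR_ideal N Fs"
    unfolding SR_ideal_def by (rule ideal_gen_sum)
  then show ?thesis
    by (simp only: poly_eq_sum_monoms[of f, symmetric])
qed

lemma not_in_SR_ideal_obtains_facet: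
  assumes "f \<in> polyR N" "f \<notin> SR_ideal N Fs"
  obtains F where "F \<in> Fs" "f \<notin> face_prime_pow N F 1"
proof -
  obtain a F where a: "a \<in> Poly_Mapping.keys f" "Poly_Mapping.keys a \<subseteq> F" and "F \<in> Fs"
    using assms in_SR_ideal_if_nonface_monoms by blast
  from a(2) have "deg_outside F a = 0"
    by (simp add: deg_outside_eq_0_iff)
  with a(1) have "f \<notin> face_prime_pow N F 1"
    unfolding face_prime_pow_def by fastforce
  with \<open>F \<in> Fs\<close> show thesis
    by (rule that)
qed

lemma facet_family_sqfree_monom_in_polyR:
  "facet_family N Fs \<Longrightarrow> F \<in> Fs \<Longrightarrow> sqfree_monom F \<in> polyR N"
  by (intro sqfree_monom_in_polyR facet_family_subset)

lemma face_prime_times_sqfree_monom_in_SR_ideal: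
  assumes Fs: "facet_family N Fs" and F: "F \<in> Fs" and g: "g \<in> face_prime_pow N F 1"
  shows "g * sqfree_monom F \<in> SR_ideal N Fs"
proof (rule in_SR_ideal_if_nonface_monoms)
  show "g * sqfree_monom F \<in> polyR N"
    using g facet_family_sqfree_monom_in_polyR[OF Fs F] by (auto simp: face_prime_pow_def intro: polyR_mult)
  show "\<forall>a\<in>Poly_Mapping.keys (g * sqfree_monom F). \<not> (\<exists>F'\<in>Fs. Poly_Mapping.keys a \<subseteq> F')"
  proof (intro ballI notI, elim bexE)
    fix a F'
    assume a: "a \<in> Poly_Mapping.keys (g * sqfree_monom F)"
      and F': "F' \<in> Fs" "Poly_Mapping.keys a \<subseteq> F'"
    obtain b where b: "b \<in> Poly_Mapping.keys g" "a = b + sqfree_exp F"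
      using a keys_mult[of g "sqfree_monom F"] by (auto simp: sqfree_monom_eq)
    then have "1 \<le> deg_outside F b"
      using g unfolding face_prime_pow_def by blast
    then obtain j where j: "j \<in> Poly_Mapping.keys b" "j \<notin> F"
      using deg_outside_eq_0_iff[of F b] by auto
    have keys_a: "Poly_Mapping.keys a = Poly_Mapping.keys b \<union> F"
      using b(2) facet_family_finite[OF Fs F] by (simp add: keys_plus_nat keys_sqfree_exp)
    then have "F \<subseteq> F'"
      using F'(2) by blast
    then have "F = F'"
      by (rule facet_family_antichain[OF Fs F F'(1)])
    with j keys_a F'(2) show False
      by blast
  qed
qed

lemma face_prime_eq_colon_SR_ideal:
  assumes Fs: "facet_family N Fs" and F: "F \<in> Fs"
  shows "face_prime_pow N F 1 = {g \<in> polyR N. g * sqfree_monom F \<in> SR_ideal N Fs}"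
proof (intro equalityI subsetI)
  fix g
  assume "g \<in> face_prime_pow N F 1"
  then show "g \<in> {g \<in> polyR N. g * sqfree_monom F \<in> SR_ideal N Fs}"
    using face_prime_times_sqfree_monom_in_SR_ideal[OF Fs F] by (auto simp: face_prime_pow_def)
next
  fix g
  assume g: "g \<in> {g \<in> polyR N. g * sqfree_monom F \<in> SR_ideal N Fs}"
  have "sqfree_monom F \<notin> face_prime_pow N F 1"
    using facet_family_finite[OF Fs F] by (simp add: face_prime_pow_def sqfree_monom_eq deg_outside_sqfree_exp)
  moreover have "sqfree_monom F * g \<in> face_prime_pow N F 1"
    using g SR_ideal_subset_face_prime[OF F] by (auto simp: mult.commute)
  ultimately show "g \<in> face_prime_pow N F 1"
    using g facet_family_sqfree_monom_in_polyR[OF Fs F] face_prime_pow_primary[of "sqfree_monom F" N F g 1]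
    by blast
qed

lemma face_prime_in_Ass_SR_ideal:
  assumes "facet_family N Fs" "F \<in> Fs"
  shows "face_prime_pow N F 1 \<in> Ass N (SR_ideal N Fs)"
  unfolding Ass_def
  using is_prime_ideal_face_prime face_prime_eq_colon_SR_ideal[OF assms]
    facet_family_sqfree_monom_in_polyR[OF assms] by blast

lemma Ass_SR_ideal_obtains_face_prime:
  assumes "P \<in> Ass N (SR_ideal N Fs)"
  obtains F where "F \<in> Fs" "P \<subseteq> face_prime_pow N F 1"
proof -
  obtain g where g: "g \<in> polyR N" "P = {h \<in> polyR N. h * g \<in> SR_ideal N Fs}" and "1 \<notin> P"
    using assms unfolding Ass_def is_prime_ideal_def by blast
  then have "g \<notin> SR_ideal N Fs"
    using polyR_one by auto
  then obtain F where F: "F \<in> Fs" "g \<notin> face_prime_pow N F 1"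
    using not_in_SR_ideal_obtains_facet[OF g(1)] by blast
  have "h \<in> face_prime_pow N F 1" if "h \<in> P" for h
  proof -
    have "h \<in> polyR N" "g * h \<in> face_prime_pow N F 1"
      using that g(2) SR_ideal_subset_face_prime[OF F(1)] by (auto simp: mult.commute)
    then show ?thesis
      using face_prime_pow_primary[of g N F h 1] g(1) F(2) by blast
  qed
  with F(1) show thesis
    using that by blast
qed

lemma ideal_pow_subset_face_prime_pow:
  assumes "I \<subseteq> face_prime_pow N F 1"
  shows "ideal_pow N I m \<subseteq> face_prime_pow N F m"
  unfolding ideal_pow_def
proof (rule ideal_gen_least[OF is_ideal_face_prime_pow], safe)
  fix xs :: "'a mpoly list"
  assume "set xs \<subseteq> I"
  then show "prod_list xs \<in> face_prime_pow N F (length xs)"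
  proof (induction xs)
    case (Cons x xs)
    then show ?case
      using face_prime_pow_mult[of x N F 1 "prod_list xs" "length xs"] assms by auto
  qed (simp add: polyR_one)
qed

lemma symb_pow_SR_ideal_subset_face_prime_pow:
  assumes "facet_family N Fs" "F \<in> Fs"
  shows "symb_pow N (SR_ideal N Fs) m \<subseteq> face_prime_pow N F m"
proof
  fix p
  assume p: "p \<in> symb_pow N (SR_ideal N Fs) m"
  obtain s where s: "s \<in> polyR N" "s \<notin> face_prime_pow N F 1" "s * p \<in> ideal_pow N (SR_ideal N Fs) m"
    using p face_prime_in_Ass_SR_ideal[OF assms] unfolding symb_pow_def by blast
  then have "s * p \<in> face_prime_pow N F m"
    using ideal_pow_subset_face_prime_pow[OF SR_ideal_subset_face_prime[OF assms(2)]] by blast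
  then show "p \<in> face_prime_pow N F m"
    using face_prime_pow_primary s p unfolding symb_pow_def by blast
qed

lemma monom_times_sqfree_monom_pow_factor:
  assumes Fs: "facet_family N Fs" and F: "F \<in> Fs"
  shows "Poly_Mapping.keys a \<subseteq> {..N} \<Longrightarrow> k \<le> deg_outside F a \<Longrightarrow>
    \<exists>xs r. length xs = k \<and> set xs \<subseteq> SR_ideal N Fs \<and> r \<in> polyR N \<and>
      Poly_Mapping.single a 1 * sqfree_monom F ^ k = r * prod_list (xs :: 'k::field mpoly list)"
proof (induction k arbitrary: a)
  case 0
  then show ?case
    by (auto intro!: exI[of _ "[]"] polyR_single)
next
  case (Suc k)
  have fin: "finite F"
    using Fs F by (rule facet_family_finite)
  obtain j where j: "j \<in> Poly_Mapping.keys a" "j \<notin> F"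
    using Suc.prems(2) deg_outside_eq_0_iff[of F a] by auto
  define a0 where "a0 = a - Poly_Mapping.single j 1"
  have a_eq: "a = a0 + Poly_Mapping.single j 1"
    using j(1) by (intro poly_mapping_eqI) (auto simp: a0_def lookup_add lookup_minus lookup_single in_keys_iff when_def)
  have "Poly_Mapping.keys a0 \<subseteq> Poly_Mapping.keys a"
    by (auto simp: a0_def in_keys_iff lookup_minus)
  moreover have "deg_outside F a = deg_outside F a0 + 1"
    using j(2) by (simp add: a_eq deg_outside_add deg_outside_single)
  ultimately obtain xs r where xs: "length xs = k" "set xs \<subseteq> SR_ideal N Fs" "r \<in> polyR N"
    "Poly_Mapping.single a0 1 * sqfree_monom F ^ k = r * prod_list (xs :: 'k mpoly list)"
    using Suc.IH[of a0] Suc.prems by auto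
  define g :: "'k mpoly" where "g = sqfree_monom (insert j F)"
  have "insert j F \<subseteq> {..N}"
    using j(1) Suc.prems(1) facet_family_subset[OF Fs F] by blast
  moreover have "\<not> (\<exists>F'\<in>Fs. insert j F \<subseteq> F')"
    using facet_family_antichain[OF Fs F] j(2) by blast
  ultimately have "g \<in> SR_ideal N Fs"
    using fin unfolding g_def sqfree_monom_eq by (intro monom_in_SR_ideal) (auto simp: keys_sqfree_exp)
  have "Poly_Mapping.single a 1 = Poly_Mapping.single a0 1 * (Poly_Mapping.single (Poly_Mapping.single j 1) 1 :: 'k mpoly)"
    by (simp add: a_eq mult_single)
  moreover have "g = Poly_Mapping.single (Poly_Mapping.single j 1) 1 * sqfree_monom F"
    using fin j(2) by (simp add: g_def sqfree_monom_eq sqfree_exp_insert mult_single)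
  ultimately have "Poly_Mapping.single a 1 * sqfree_monom F ^ Suc k
      = (Poly_Mapping.single a0 1 * sqfree_monom F ^ k) * g"
    by (simp add: ac_simps)
  also have "\<dots> = r * prod_list (g # xs)"
    using xs(4) by (simp add: ac_simps)
  finally show ?case
    using xs \<open>g \<in> SR_ideal N Fs\<close> by (intro exI[of _ "g # xs"] exI[of _ r]) auto
qed

lemma keys_sqfree_monom_pow:
  assumes "finite F" "b \<in> Poly_Mapping.keys (sqfree_monom F ^ k :: 'k::field mpoly)"
  shows "deg_outside F b = 0"
  using assms(2)
proof (induction k arbitrary: b)
  case (Suc k)
  have "\<forall>c\<in>Poly_Mapping.keys (sqfree_monom F :: 'k mpoly). deg_outside F c = 0"
    using assms(1) by (simp add: sqfree_monom_eq deg_outside_sqfree_exp)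
  moreover have "\<forall>c\<in>Poly_Mapping.keys (sqfree_monom F ^ k :: 'k mpoly). deg_outside F c = 0"
    using Suc.IH by blast
  ultimately show ?case
    using deg_outside_keys_mult[of "sqfree_monom F" F 0 "sqfree_monom F ^ k" 0 b] Suc.prems by simp
qed (simp add: deg_outside_def)

lemma sqfree_monom_pow_notin_face_prime:
  assumes "finite F"
  shows "sqfree_monom F ^ k \<notin> (face_prime_pow N F 1 :: 'k::field mpoly set)"
proof
  have "Poly_Mapping.keys (sqfree_monom F :: 'k mpoly) \<noteq> {}"
    by (simp add: sqfree_monom_eq)
  then have "(sqfree_monom F :: 'k mpoly) ^ k \<noteq> 0"
    by simp
  then obtain b where b: "b \<in> Poly_Mapping.keys (sqfree_monom F ^ k :: 'k mpoly)"
    using keys_eq_empty by blast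
  assume "(sqfree_monom F ^ k :: 'k mpoly) \<in> face_prime_pow N F 1"
  with b have "1 \<le> deg_outside F b"
    unfolding face_prime_pow_def by blast
  with keys_sqfree_monom_pow[OF assms b] show False
    by simp
qed

definition symb_pow_exp :: "nat \<Rightarrow> nat set set \<Rightarrow> nat \<Rightarrow> (nat \<Rightarrow>\<^sub>0 nat) \<Rightarrow> bool" where
  "symb_pow_exp N Fs m a \<longleftrightarrow> Poly_Mapping.keys a \<subseteq> {..N} \<and> (\<forall>F\<in>Fs. m \<le> deg_outside F a)"

lemma monom_in_symb_pow_SR_ideal:
  assumes Fs: "facet_family N Fs" and "symb_pow_exp N Fs m a"
  shows "Poly_Mapping.single a 1 \<in> symb_pow N (SR_ideal N Fs :: 'k::field mpoly set) m"
  unfolding symb_pow_def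
proof (intro CollectI conjI ballI)
  have a: "Poly_Mapping.keys a \<subseteq> {..N}" and deg: "\<forall>F\<in>Fs. m \<le> deg_outside F a"
    using \<open>symb_pow_exp N Fs m a\<close> by (simp_all add: symb_pow_exp_def)
  show "Poly_Mapping.single a 1 \<in> polyR N"
    using a by (rule polyR_single)
  fix P
  assume "P \<in> Ass N (SR_ideal N Fs :: 'k mpoly set)"
  then obtain F where F: "F \<in> Fs" "P \<subseteq> face_prime_pow N F 1"
    by (rule Ass_SR_ideal_obtains_face_prime)
  have "(sqfree_monom F :: 'k mpoly) ^ m \<notin> P"
    using F sqfree_monom_pow_notin_face_prime[OF facet_family_finite[OF Fs F(1)]] by blast
  moreover have "(sqfree_monom F :: 'k mpoly) ^ m \<in> polyR N"
    using facet_family_sqfree_monom_in_polyR[OF Fs F(1)] by (induction m) (auto intro: polyR_mult polyR_one)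
  moreover obtain xs r where xs: "length xs = m" "set xs \<subseteq> SR_ideal N Fs" and r: "r \<in> polyR N"
    and factor: "Poly_Mapping.single a 1 * sqfree_monom F ^ m = r * prod_list (xs :: 'k mpoly list)"
    using monom_times_sqfree_monom_pow_factor[OF Fs F(1) a] deg F(1) by blast
  have "prod_list xs \<in> {prod_list xs | xs. length xs = m \<and> set xs \<subseteq> SR_ideal N Fs}"
    using xs by blast
  then have "r * prod_list xs \<in> ideal_pow N (SR_ideal N Fs) m"
    unfolding ideal_pow_def using r by (rule ideal_gen_mult_gen)
  then have "(sqfree_monom F :: 'k mpoly) ^ m * Poly_Mapping.single a 1 \<in> ideal_pow N (SR_ideal N Fs) m"
    by (simp only: factor[symmetric] mult.commute)
  ultimately show "\<exists>s\<in>polyR N - P. s * Poly_Mapping.single a 1 \<in> ideal_pow N (SR_ideal N Fs) m"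
    by blast
qed

lemma symb_pow_exp_if_in_keys:
  assumes "facet_family N Fs" "p \<in> symb_pow N (SR_ideal N Fs) m" "a \<in> Poly_Mapping.keys p"
  shows "symb_pow_exp N Fs m a"
proof -
  have "Poly_Mapping.keys a \<subseteq> {..N}"
    using assms(2,3) by (auto simp: symb_pow_def polyR_def)
  moreover have "m \<le> deg_outside F a" if "F \<in> Fs" for F
    using symb_pow_SR_ideal_subset_face_prime_pow[OF assms(1) that] assms(2,3)
    by (auto simp: face_prime_pow_def)
  ultimately show ?thesis
    by (simp add: symb_pow_exp_def)
qed

lemma alpha_symb_pow_SR_ideal:
  assumes "facet_family N Fs"
  shows "alpha (symb_pow N (SR_ideal N Fs :: 'k::field mpoly set) m)
    = (LEAST t. \<exists>a. symb_pow_exp N Fs m a \<and> mdeg a = t)"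
proof -
  have "(\<exists>p\<in>symb_pow N (SR_ideal N Fs :: 'k mpoly set) m. p \<noteq> 0 \<and> homogeneous t p)
      \<longleftrightarrow> (\<exists>a. symb_pow_exp N Fs m a \<and> mdeg a = t)" for t
  proof
    assume "\<exists>p\<in>symb_pow N (SR_ideal N Fs :: 'k mpoly set) m. p \<noteq> 0 \<and> homogeneous t p"
    then obtain p :: "'k mpoly" and a where "p \<in> symb_pow N (SR_ideal N Fs) m" "homogeneous t p"
      "a \<in> Poly_Mapping.keys p"
      by (metis all_not_in_conv keys_eq_empty)
    then show "\<exists>a. symb_pow_exp N Fs m a \<and> mdeg a = t"
      using symb_pow_exp_if_in_keys[OF assms] unfolding homogeneous_def by blast
  next
    assume "\<exists>a. symb_pow_exp N Fs m a \<and> mdeg a = t"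
    then obtain a where "symb_pow_exp N Fs m a" "mdeg a = t"
      by blast
    then have "Poly_Mapping.single a 1 \<in> symb_pow N (SR_ideal N Fs :: 'k mpoly set) m"
      "homogeneous t (Poly_Mapping.single a (1 :: 'k))"
      using monom_in_symb_pow_SR_ideal[OF assms] by (auto simp: homogeneous_def)
    moreover have "Poly_Mapping.single a (1 :: 'k) \<noteq> 0"
      by (metis keys_eq_empty keys_single insert_not_empty one_neq_zero)
    ultimately show "\<exists>p\<in>symb_pow N (SR_ideal N Fs :: 'k mpoly set) m. p \<noteq> 0 \<and> homogeneous t p"
      by blast
  qed
  then show ?thesis
    unfolding alpha_def by simp
qed

lemma cycle_edge_bounds:
  assumes "n \<ge> 3" "cycle_edge n i j"
  shows "1 \<le> i" "i \<le> n" "1 \<le> j" "j \<le> n" "i \<noteq> j"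
  using assms unfolding cycle_edge_def by auto

lemma facets_B_iff:
  "F \<in> facets_B n \<longleftrightarrow> (\<exists>c i j. (c = 0 \<or> c = n + 1) \<and> cycle_edge n i j \<and> F = {c, i, j})"
  unfolding facets_B_def by blast

lemma facets_B_subset_card:
  assumes "n \<ge> 3" "F \<in> facets_B n"
  shows "F \<subseteq> {..n + 1}" "card F = 3"
proof -
  obtain c i j where cij: "c = 0 \<or> c = n + 1" "cycle_edge n i j" "F = {c, i, j}"
    using assms(2) unfolding facets_B_iff by blast
  note bounds = cycle_edge_bounds[OF assms(1) cij(2)]
  show "F \<subseteq> {..n + 1}" "card F = 3"
    using cij bounds by auto
qed

lemma facet_family_B: "n \<ge> 3 \<Longrightarrow> facet_family (n + 1) (facets_B n)"
  unfolding facet_family_def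
  by (metis card_subset_eq facets_B_subset_card finite_atMost rev_finite_subset)

lemma alpha_nm_eq_Least:
  assumes "n \<ge> 3"
  shows "alpha_nm TYPE('k::field) n m = (LEAST t. \<exists>a. symb_pow_exp (n + 1) (facets_B n) m a \<and> mdeg a = t)"
proof -
  have "SR_ideal_B n = (SR_ideal (n + 1) (facets_B n) :: 'k mpoly set)"
    unfolding SR_ideal_B_def SR_ideal_def face_B_def ..
  then show ?thesis
    unfolding alpha_nm_def using alpha_symb_pow_SR_ideal[OF facet_family_B[OF assms]] by simp
qed

lemma symb_pow_exp_apexes:
  assumes "n \<ge> 3"
  shows "symb_pow_exp (n + 1) (facets_B n) m (Poly_Mapping.single 0 m + Poly_Mapping.single (n + 1) m)"
  unfolding symb_pow_exp_def
proof (intro conjI ballI)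
  show "Poly_Mapping.keys (Poly_Mapping.single 0 m + Poly_Mapping.single (n + 1) m) \<subseteq> {..n + 1}"
    by (auto simp: keys_plus_nat)
  fix F
  assume "F \<in> facets_B n"
  then obtain c i j where cij: "c = 0 \<or> c = n + 1" "cycle_edge n i j" "F = {c, i, j}"
    unfolding facets_B_iff by blast
  note bounds = cycle_edge_bounds[OF assms cij(2)]
  have "0 \<notin> F \<or> n + 1 \<notin> F"
    using cij bounds by auto
  then show "m \<le> deg_outside F (Poly_Mapping.single 0 m + Poly_Mapping.single (n + 1) m)"
    by (auto simp: deg_outside_add deg_outside_single)
qed

definition relabel_apex :: "nat \<Rightarrow> (nat \<Rightarrow>\<^sub>0 nat) \<Rightarrow> (nat \<Rightarrow>\<^sub>0 nat)" where
  "relabel_apex n a = Abs_poly_mapping (\<lambda>v. if v = n + 2 then Poly_Mapping.lookup a (n + 1)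
     else if v = n + 1 then 0 else Poly_Mapping.lookup a v)"

lemma lookup_relabel_apex:
  "Poly_Mapping.lookup (relabel_apex n a) v = (if v = n + 2 then Poly_Mapping.lookup a (n + 1)
     else if v = n + 1 then 0 else Poly_Mapping.lookup a v)"
proof -
  have "finite {v. (if v = n + 2 then Poly_Mapping.lookup a (n + 1)
      else if v = n + 1 then 0 else Poly_Mapping.lookup a v) \<noteq> 0}"
    by (rule finite_subset[of _ "insert (n + 2) (Poly_Mapping.keys a)"]) (auto simp: in_keys_iff)
  then show ?thesis
    unfolding relabel_apex_def by simp
qed

lemma keys_relabel_apex:
  assumes "Poly_Mapping.keys a \<subseteq> {..n + 1}"
  shows "Poly_Mapping.keys (relabel_apex n a) \<subseteq> {..n + 2}"
proof
  fix v
  assume "v \<in> Poly_Mapping.keys (relabel_apex n a)"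
  then have "v = n + 2 \<or> v \<in> Poly_Mapping.keys a"
    by (auto simp: in_keys_iff lookup_relabel_apex split: if_splits)
  then show "v \<in> {..n + 2}"
    using assms by auto
qed

lemma mdeg_relabel_apex:
  assumes "Poly_Mapping.keys a \<subseteq> {..n + 1}"
  shows "mdeg (relabel_apex n a) = mdeg a"
proof -
  have "{..n + 2} = insert (n + 2) (insert (n + 1) {..n})" "{..n + 1} = insert (n + 1) {..n}"
    by auto
  moreover have "(\<Sum>v\<in>{..n}. Poly_Mapping.lookup (relabel_apex n a) v) = (\<Sum>v\<in>{..n}. Poly_Mapping.lookup a v)"
    by (rule sum.cong) (auto simp: lookup_relabel_apex)
  ultimately have "(\<Sum>v\<in>{..n + 2}. Poly_Mapping.lookup (relabel_apex n a) v) = (\<Sum>v\<in>{..n + 1}. Poly_Mapping.lookup a v)"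
    by (simp add: lookup_relabel_apex)
  then show ?thesis
    using mdeg_eq_sum_superset[OF _ assms] mdeg_eq_sum_superset[OF _ keys_relabel_apex[OF assms]] by simp
qed

lemma facet_B_Suc_sum_relabel_apex_le:
  assumes n: "n \<ge> 3" and F': "F' \<in> facets_B (n + 1)"
  obtains F where "F \<in> facets_B n"
    "(\<Sum>v\<in>F'. Poly_Mapping.lookup (relabel_apex n a) v) \<le> (\<Sum>v\<in>F. Poly_Mapping.lookup a v)"
proof -
  let ?a = "Poly_Mapping.lookup a" and ?a' = "Poly_Mapping.lookup (relabel_apex n a)"
  obtain c' i j where cij: "c' = 0 \<or> c' = n + 2" "cycle_edge (n + 1) i j" "F' = {c', i, j}"
    using F' unfolding facets_B_iff by auto
  note bounds = cycle_edge_bounds[of "n + 1", OF _ cij(2)]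
  define c where "c = (if c' = 0 then 0 else n + 1)"
  have c: "c = 0 \<or> c = n + 1" "?a' c' = ?a c"
    using cij(1) by (auto simp: c_def lookup_relabel_apex)
  have sum_F': "(\<Sum>v\<in>F'. ?a' v) = ?a' c' + ?a' i + ?a' j"
    using cij bounds n by auto
  show thesis
  proof (cases "i \<le> n - 1 \<and> j = i + 1")
    case True
    then have "cycle_edge n i j"
      using bounds n unfolding cycle_edge_def by auto
    then have "{c, i, j} \<in> facets_B n"
      unfolding facets_B_iff using c(1) by blast
    moreover have "?a' i = ?a i" "?a' j = ?a j"
      using True bounds n by (auto simp: lookup_relabel_apex)
    moreover have "(\<Sum>v\<in>{c, i, j}. ?a v) = ?a c + ?a i + ?a j"
      using True bounds n c(1) by auto
    ultimately show thesis
      using that sum_F' c(2) by simp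
  next
    case False
    then have "(i = n \<and> j = n + 1) \<or> (i = n + 1 \<and> j = 1)"
      using cij(2) unfolding cycle_edge_def by auto
    then have "?a' i + ?a' j \<le> ?a n + ?a 1"
      using n by (auto simp: lookup_relabel_apex)
    moreover have "{c, n, 1} \<in> facets_B n"
      unfolding facets_B_iff cycle_edge_def using c(1) by blast
    moreover have "(\<Sum>v\<in>{c, n, 1}. ?a v) = ?a c + ?a n + ?a 1"
      using n c(1) by auto
    ultimately show thesis
      using that sum_F' c(2) by simp
  qed
qed

lemma symb_pow_exp_relabel_apex:
  assumes n: "n \<ge> 3" and a: "symb_pow_exp (n + 1) (facets_B n) m a"
  shows "symb_pow_exp (n + 2) (facets_B (n + 1)) m (relabel_apex n a)"
  unfolding symb_pow_exp_def
proof (intro conjI ballI)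
  have keys_a: "Poly_Mapping.keys a \<subseteq> {..n + 1}"
    using a by (simp add: symb_pow_exp_def)
  then show "Poly_Mapping.keys (relabel_apex n a) \<subseteq> {..n + 2}"
    by (rule keys_relabel_apex)
  fix F'
  assume F': "F' \<in> facets_B (n + 1)"
  then obtain F where F: "F \<in> facets_B n"
    and le: "(\<Sum>v\<in>F'. Poly_Mapping.lookup (relabel_apex n a) v) \<le> (\<Sum>v\<in>F. Poly_Mapping.lookup a v)"
    using facet_B_Suc_sum_relabel_apex_le[OF n] by blast
  have "finite F" "finite F'"
    using facet_family_finite[OF facet_family_B[OF n] F]
      facet_family_finite[OF facet_family_B[of "n + 1"] F'] n by simp_all
  then have "deg_outside F a + (\<Sum>v\<in>F. Poly_Mapping.lookup a v)
      = deg_outside F' (relabel_apex n a) + (\<Sum>v\<in>F'. Poly_Mapping.lookup (relabel_apex n a) v)"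
    using mdeg_relabel_apex[OF keys_a] by (simp add: deg_outside_plus_sum)
  moreover have "m \<le> deg_outside F a"
    using a F by (simp add: symb_pow_exp_def)
  ultimately show "m \<le> deg_outside F' (relabel_apex n a)"
    using le by linarith
qed

theorem proposition3p13:
  fixes n m :: nat
  assumes "n \<ge> 3" and "m \<ge> 1"
  shows "alpha_nm TYPE('k::field) n m \<ge> alpha_nm TYPE('k) (n + 1) m"
proof -
  have n: "n \<ge> 3" "n + 1 \<ge> 3"
    using assms(1) by simp_all
  have "\<exists>t a. symb_pow_exp (n + 1) (facets_B n) m a \<and> mdeg a = t"
    using symb_pow_exp_apexes[OF n(1)] by blast
  from LeastI_ex[OF this] obtain a where a: "symb_pow_exp (n + 1) (facets_B n) m a"
    "mdeg a = (LEAST t. \<exists>a. symb_pow_exp (n + 1) (facets_B n) m a \<and> mdeg a = t)"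
    by blast
  have "symb_pow_exp (n + 1 + 1) (facets_B (n + 1)) m (relabel_apex n a)"
    using symb_pow_exp_relabel_apex[OF n(1) a(1)] by simp
  moreover have "mdeg (relabel_apex n a) = alpha_nm TYPE('k) n m"
    using a mdeg_relabel_apex by (simp add: symb_pow_exp_def alpha_nm_eq_Least[OF n(1)])
  ultimately show ?thesis
    unfolding alpha_nm_eq_Least[OF n(2)] by (blast intro: Least_le)
qed

end
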